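(* Let $p>3$ be a prime. Then the integral homology $\mathrm{Kh}_{alg}(p,\infty;\mathbb{Z})=H(A_p(\mathbb{Z}),d_2)$ contains a nonzero element of additive order $p$ in the bidegree with $q$-degree $2p+6$ and $t$-degree $2p$.
   Context: For a commutative ring $R$ and $n\ge1$, let $A_n(R)=R[x_0,\dots,x_{n-1}]\otimes_R\Lambda_R[\xi_0,\dots,\xi_{n-1}]$ be the free graded-commutative $R$-algebra on even generators $x_k$ and odd generators $\xi_k$. It is bigraded by declaring $x_k$ to have $q$-degree $2k+2$ and $t$-degree $2k$, and $\xi_k$ to have $q$-degree $2k+4$ and $t$-degree $2k+1$. Let $d_2$ be the unique $R$-linear odd derivation ($d_2(ab)=d_2(a)b+(-1)^{|a|}a\,d_2(b)$, $|a|$ = number of $\xi$'s mod 2) with $d_2(x_k)=0$ and $d_2(\xi_k)=\sum_{i=0}^{k}x_ix_{k-i}$; it preserves $q$-degree and lowers $t$-degree by 1. $\mathrm{Kh}_{alg}(n,\infty;R)=H(A_n(R),d_2)$. *)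

theory Defs
  imports "HOL-Library.Poly_Mapping" "HOL-Computational_Algebra.Primes"
begin

text \<open>A monomial x^e xi_S of A_n: e is the exponent vector of the even generators x_k,
  S the (finite) set of indices of the odd generators xi_k occurring; xi_S denotes the
  product of the xi_k, k in S, in increasing order of k.\<close>

type_synonym kh_mon = "(nat \<Rightarrow>\<^sub>0 nat) \<times> nat set"
type_synonym kh_elt = "kh_mon \<Rightarrow>\<^sub>0 int"

definition kh_valid_mon :: "nat \<Rightarrow> kh_mon \<Rightarrow> bool" where
  "kh_valid_mon n m \<longleftrightarrow> Poly_Mapping.keys (fst m) \<subseteq> {..<n} \<and> snd m \<subseteq> {..<n}"

definition kh_A :: "nat \<Rightarrow> kh_elt set" where
  "kh_A n = {f. \<forall>m\<in>Poly_Mapping.keys f. kh_valid_mon n m}"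

definition kh_qdeg :: "kh_mon \<Rightarrow> nat" where
  "kh_qdeg m = (\<Sum>i\<in>Poly_Mapping.keys (fst m). Poly_Mapping.lookup (fst m) i * (2*i+2)) + (\<Sum>k\<in>snd m. 2*k+4)"

definition kh_tdeg :: "kh_mon \<Rightarrow> nat" where
  "kh_tdeg m = (\<Sum>i\<in>Poly_Mapping.keys (fst m). Poly_Mapping.lookup (fst m) i * (2*i)) + (\<Sum>k\<in>snd m. 2*k+1)"

definition kh_homog :: "nat \<Rightarrow> nat \<Rightarrow> nat \<Rightarrow> kh_elt set" where
  "kh_homog n q t = {f \<in> kh_A n. \<forall>m\<in>Poly_Mapping.keys f. kh_qdeg m = q \<and> kh_tdeg m = t}"

text \<open>d_2 on a monomial: x_k are d-closed, d(xi_j) = sum_{i=0..j} x_i x_{j-i}, and the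
  odd Leibniz rule gives d(x^e xi_S) = sum_{j in S} (-1)^{#{s in S. s<j}} x^e d(xi_j) xi_{S-{j}}.\<close>
definition kh_d_mon :: "kh_mon \<Rightarrow> kh_elt" where
  "kh_d_mon m = (\<Sum>j\<in>snd m. \<Sum>i\<le>j.
      frag_cmul ((-1) ^ card {s\<in>snd m. s < j})
        (frag_of (fst m + Poly_Mapping.single i 1 + Poly_Mapping.single (j - i) 1, snd m - {j})))"

definition kh_d :: "kh_elt \<Rightarrow> kh_elt" where
  "kh_d f = frag_extend kh_d_mon f"

definition kh_cycles :: "nat \<Rightarrow> nat \<Rightarrow> nat \<Rightarrow> kh_elt set" where
  "kh_cycles n q t = {z \<in> kh_homog n q t. kh_d z = 0}"

definition kh_boundaries :: "nat \<Rightarrow> nat \<Rightarrow> nat \<Rightarrow> kh_elt set" where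
  "kh_boundaries n q t = kh_d ` kh_homog n q (t + 1)"

end

theory Submission
  imports Defs
begin

(* Let F = sum_{i=1}^{p-1} i * x_i xi_{p-i}, of bidegree (2p+6, 2p+1).  Its differential
   d F = sum_i i * sum_l x_i x_l x_{p-i-l} is a sum over ordered triples (a,b,c) with a+b+c = p;
   since the monomial x_a x_b x_c is symmetric in a,b,c, three times each coefficient equals
   p times the number of ordered triples giving that monomial.  As p does not divide 3,
   d F = p * z for an integral cycle z (it has no xi-factor), so p * z is a boundary.

   To see that k * z is no boundary for 0 < k < p we use an integral linear functional
   "detect" on chains: the only monomials of bidegree (2p+6, 2p+1) are x_i xi_j with
   i + j = p, and detect(d(x_i xi_j)) is p for i = 1 and 0 otherwise.  Hence detect takes
   values in pZ on boundaries of this bidegree, while detect(d F) = p gives detect(z) = 1. *)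

section \<open>Linear functionals on free abelian groups\<close>

definition frag_eval :: "('a \<Rightarrow> int) \<Rightarrow> ('a \<Rightarrow>\<^sub>0 int) \<Rightarrow> int" where
  "frag_eval \<phi> f = Poly_Mapping.lookup (frag_extend (\<lambda>m. frag_cmul (\<phi> m) (frag_of ())) f) ()"

lemma frag_eval_0 [simp]: "frag_eval \<phi> 0 = 0"
  by (simp add: frag_eval_def)

lemma frag_eval_of [simp]: "frag_eval \<phi> (frag_of m) = \<phi> m"
  by (simp add: frag_eval_def)

lemma frag_eval_add: "frag_eval \<phi> (a + b) = frag_eval \<phi> a + frag_eval \<phi> b"
  by (simp add: frag_eval_def frag_extend_add lookup_add)

lemma frag_eval_cmul [simp]: "frag_eval \<phi> (frag_cmul c a) = c * frag_eval \<phi> a"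
  by (simp add: frag_eval_def frag_extend_cmul)

lemma frag_eval_sum: "frag_eval \<phi> (\<Sum>i\<in>I. g i) = (\<Sum>i\<in>I. frag_eval \<phi> (g i))"
  by (induction I rule: infinite_finite_induct) (simp_all add: frag_eval_add)

lemma frag_eval_extend:
  "frag_eval \<phi> (frag_extend g f) =
     (\<Sum>m\<in>Poly_Mapping.keys f. Poly_Mapping.lookup f m * frag_eval \<phi> (g m))"
  by (simp add: frag_extend_def frag_eval_sum)

section \<open>Degree bookkeeping\<close>

definition exp_weight :: "(nat \<Rightarrow> nat) \<Rightarrow> (nat \<Rightarrow>\<^sub>0 nat) \<Rightarrow> nat" where
  "exp_weight g e = (\<Sum>k\<in>Poly_Mapping.keys e. Poly_Mapping.lookup e k * g k)"

lemma exp_weight_superset: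
  "finite A \<Longrightarrow> Poly_Mapping.keys e \<subseteq> A \<Longrightarrow>
     exp_weight g e = (\<Sum>k\<in>A. Poly_Mapping.lookup e k * g k)"
  unfolding exp_weight_def by (rule sum.mono_neutral_left) (auto simp: in_keys_iff)

lemma exp_weight_add: "exp_weight g (a + b) = exp_weight g a + exp_weight g b"
proof -
  let ?A = "Poly_Mapping.keys a \<union> Poly_Mapping.keys b"
  have "exp_weight g (a + b) = (\<Sum>k\<in>?A. Poly_Mapping.lookup (a + b) k * g k)"
    by (rule exp_weight_superset) (simp_all add: keys_add)
  also have "\<dots> = (\<Sum>k\<in>?A. Poly_Mapping.lookup a k * g k) + (\<Sum>k\<in>?A. Poly_Mapping.lookup b k * g k)"
    by (simp add: lookup_add sum.distrib algebra_simps)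
  also have "\<dots> = exp_weight g a + exp_weight g b"
    using exp_weight_superset[of ?A a g] exp_weight_superset[of ?A b g] by simp
  finally show ?thesis .
qed

lemma exp_weight_single [simp]: "exp_weight g (Poly_Mapping.single i c) = c * g i"
  by (simp add: exp_weight_def)

lemma exp_weight_one_eq_1:
  assumes "exp_weight (\<lambda>_. 1) e = 1"
  obtains i where "e = Poly_Mapping.single i 1"
proof -
  let ?K = "Poly_Mapping.keys e"
  have total: "(\<Sum>k\<in>?K. Poly_Mapping.lookup e k) = 1"
    using assms by (simp add: exp_weight_def)
  have "of_nat (card ?K) * 1 \<le> (\<Sum>k\<in>?K. Poly_Mapping.lookup e k)"
    by (rule sum_bounded_below) (simp add: in_keys_iff)
  then have "card ?K \<le> 1"
    using total by simp
  moreover have "card ?K \<noteq> 0"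
    using total by auto
  ultimately have "card ?K = 1"
    by linarith
  then obtain i where K: "?K = {i}"
    by (auto simp: card_1_singleton_iff)
  have lookup_i: "Poly_Mapping.lookup e i = 1"
    using total by (simp add: K)
  have "e = Poly_Mapping.single i 1"
  proof (rule poly_mapping_eqI)
    fix k
    show "Poly_Mapping.lookup e k = Poly_Mapping.lookup (Poly_Mapping.single i 1) k"
    proof (cases "k = i")
      case True
      then show ?thesis using lookup_i by simp
    next
      case False
      then have "k \<notin> ?K" using K by simp
      then show ?thesis using False by (simp add: in_keys_iff lookup_single_not_eq)
    qed
  qed
  then show thesis by (rule that)
qed

lemma qdeg_weight: "kh_qdeg m = exp_weight (\<lambda>i. 2*i+2) (fst m) + (\<Sum>k\<in>snd m. 2*k+4)"
  by (simp add: kh_qdeg_def exp_weight_def)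

lemma tdeg_weight: "kh_tdeg m = exp_weight (\<lambda>i. 2*i) (fst m) + (\<Sum>k\<in>snd m. 2*k+1)"
  by (simp add: kh_tdeg_def exp_weight_def)

lemma qdeg_tdeg_difference:
  "kh_qdeg m = kh_tdeg m + 2 * exp_weight (\<lambda>_. 1) (fst m) + 3 * card (snd m)"
proof -
  have "exp_weight (\<lambda>i. 2*i+2) (fst m) = exp_weight (\<lambda>i. 2*i) (fst m) + 2 * exp_weight (\<lambda>_. 1) (fst m)"
    by (simp add: exp_weight_def sum.distrib sum_distrib_left algebra_simps)
  moreover have "(\<Sum>k\<in>snd m. 2*k+4) = (\<Sum>k\<in>snd m. 2*k+1) + 3 * card (snd m)"
    unfolding sum.distrib by simp
  ultimately show ?thesis
    by (simp add: qdeg_weight tdeg_weight)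
qed

lemma bidegree_monomials:
  assumes valid: "kh_valid_mon n m" and q: "kh_qdeg m = 2*p+6" and t: "kh_tdeg m = 2*p+1"
  obtains i j where "m = (Poly_Mapping.single i 1, {j})" "i + j = p" "i < n" "j < n"
proof -
  have "2 * exp_weight (\<lambda>_. 1) (fst m) + 3 * card (snd m) = 5"
    using q t qdeg_tdeg_difference[of m] by simp
  then have one_x: "exp_weight (\<lambda>_. 1) (fst m) = 1" and one_xi: "card (snd m) = 1"
    by presburger+
  obtain i where "fst m = Poly_Mapping.single i 1"
    using one_x by (rule exp_weight_one_eq_1)
  moreover obtain j where "snd m = {j}"
    using one_xi by (auto simp: card_1_singleton_iff)
  ultimately have m: "m = (Poly_Mapping.single i 1, {j})"
    by (cases m) simp
  show thesis
  proof (rule that[OF m])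
    show "i + j = p"
      using t by (simp add: tdeg_weight m)
    show "i < n" "j < n"
      using valid by (auto simp: kh_valid_mon_def m)
  qed
qed

definition x3 :: "nat \<Rightarrow> nat \<Rightarrow> nat \<Rightarrow> kh_mon" where
  "x3 a b c = (Poly_Mapping.single a 1 + Poly_Mapping.single b 1 + Poly_Mapping.single c 1, {})"

lemma x3_swap12: "x3 a b c = x3 b a c"
  by (simp add: x3_def algebra_simps)

lemma x3_swap13: "x3 a b c = x3 c b a"
  by (simp add: x3_def algebra_simps)

lemma x3_bidegree: "kh_qdeg (x3 a b c) = 2*(a+b+c)+6" "kh_tdeg (x3 a b c) = 2*(a+b+c)"
  by (simp_all add: x3_def qdeg_weight tdeg_weight exp_weight_add)

lemma x3_valid:
  assumes "a < n" "b < n" "c < n"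
  shows "kh_valid_mon n (x3 a b c)"
proof -
  have "Poly_Mapping.keys (Poly_Mapping.single a (1::nat) + Poly_Mapping.single b 1 + Poly_Mapping.single c 1)
          \<subseteq> {a, b, c}"
    using keys_add[of "Poly_Mapping.single a (1::nat) + Poly_Mapping.single b 1" "Poly_Mapping.single c 1"]
      keys_add[of "Poly_Mapping.single a (1::nat)" "Poly_Mapping.single b 1"] by auto
  then show ?thesis
    using assms by (auto simp: x3_def kh_valid_mon_def)
qed

lemma d_x_xi: "kh_d_mon (Poly_Mapping.single i 1, {j}) = (\<Sum>l\<le>j. frag_of (x3 i l (j - l)))"
proof -
  have no_smaller: "{s. s = j \<and> s < j} = {}" by auto
  show ?thesis by (simp add: kh_d_mon_def x3_def no_smaller)
qed

section \<open>The detecting functional\<close>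

definition detect :: "kh_mon \<Rightarrow> int" where
  "detect m = (let e = fst m in
     if snd m \<noteq> {} then 0
     else if Poly_Mapping.lookup e 0 = 0 then int (Poly_Mapping.lookup e 1)
     else if Poly_Mapping.lookup e 0 = 1 \<and> Poly_Mapping.lookup e 1 = 0 then -1 else 0)"

lemma detect_terms_i1:
  assumes "3 \<le> j" "l \<le> j"
  shows "detect (x3 1 l (j - l)) =
    (if l \<in> {1..<j} then 1 else 0) + (if l = 1 then 1 else 0) + (if l = j - 1 then 1 else 0)"
proof -
  have "l = 0 \<or> l = j \<or> l = 1 \<or> l = j - 1 \<or> (1 < l \<and> l < j - 1)" using assms by linarith
  then show ?thesis using assms unfolding detect_def x3_def
    by (elim disjE; (simp add: lookup_add lookup_single when_def)?; presburger?)
qed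

lemma detect_terms_i2:
  assumes "2 \<le> i" "2 \<le> j" "l \<le> j"
  shows "detect (x3 i l (j - l)) =
    - (if l = 0 then 1 else 0) - (if l = j then 1 else 0) + (if l = 1 then 1 else 0) + (if l = j - 1 then 1 else 0)"
proof -
  have "l = 0 \<or> l = j \<or> l = 1 \<or> l = j - 1 \<or> (1 < l \<and> l < j - 1)" using assms by linarith
  then show ?thesis using assms unfolding detect_def x3_def
    by (elim disjE; (simp add: lookup_add lookup_single when_def)?; presburger?)
qed

lemma detect_terms_j1:
  assumes "2 \<le> i" "l \<le> 1"
  shows "detect (x3 i l (1 - l)) = 0"
proof -
  have "l = 0 \<or> l = 1" using assms by linarith
  then show ?thesis using assms unfolding detect_def x3_def
    by (elim disjE; (simp add: lookup_add lookup_single when_def)?; presburger?)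
qed

lemma detect_d_x_xi:
  assumes "1 \<le> i" "1 \<le> j" "i + j = p" "3 < p"
  shows "frag_eval detect (kh_d_mon (Poly_Mapping.single i 1, {j})) = (if i = 1 then int p else 0)"
proof -
  have eval: "frag_eval detect (kh_d_mon (Poly_Mapping.single i 1, {j})) = (\<Sum>l\<le>j. detect (x3 i l (j - l)))"
    unfolding d_x_xi frag_eval_sum frag_eval_of ..
  consider "i = 1" | "2 \<le> i" "j = 1" | "2 \<le> i" "2 \<le> j"
    using assms by linarith
  then show ?thesis
  proof cases
    case 1
    then have j3: "3 \<le> j" using assms by linarith
    have "(\<Sum>l\<le>j. detect (x3 i l (j - l))) =
        (\<Sum>l\<le>j. (if l \<in> {1..<j} then 1 else 0)) + (\<Sum>l\<le>j. (if l = 1 then 1 else 0))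
          + (\<Sum>l\<le>j. (if l = j - 1 then 1 else 0))"
      using detect_terms_i1[OF j3] 1 by (simp add: sum.distrib)
    also have "(\<Sum>l\<le>j. (if l \<in> {1..<j} then 1 else 0)) = (\<Sum>l\<in>{1..<j}. (1::int))"
      by (rule sum.mono_neutral_cong_right) auto
    finally show ?thesis using 1 assms j3 eval by simp
  next
    case 2
    then show ?thesis using eval detect_terms_j1[of i 0] detect_terms_j1[of i 1] by simp
  next
    case 3
    have "(\<Sum>l\<le>j. detect (x3 i l (j - l))) =
        - (\<Sum>l\<le>j. (if l = 0 then 1 else 0)) - (\<Sum>l\<le>j. (if l = j then 1 else 0))
          + (\<Sum>l\<le>j. (if l = 1 then 1 else 0)) + (\<Sum>l\<le>j. (if l = j - 1 then (1::int) else 0))"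
      using detect_terms_i2[OF 3] by (simp add: sum.distrib sum_subtractf sum_negf)
    then show ?thesis using 3 eval by simp
  qed
qed

lemma detect_boundary_dvd:
  assumes f: "f \<in> kh_homog p (2*p+6) (2*p+1)" and "3 < p"
  shows "int p dvd frag_eval detect (kh_d f)"
  unfolding kh_d_def frag_eval_extend
proof (intro dvd_sum dvd_mult)
  fix m assume "m \<in> Poly_Mapping.keys f"
  then have "kh_valid_mon p m" "kh_qdeg m = 2*p+6" "kh_tdeg m = 2*p+1"
    using f by (auto simp: kh_homog_def kh_A_def)
  then obtain i j where m: "m = (Poly_Mapping.single i 1, {j})" and ij: "i + j = p" "i < p" "j < p"
    by (rule bidegree_monomials)
  then show "int p dvd frag_eval detect (kh_d_mon m)"
    using detect_d_x_xi[of i j p] assms(2) by simp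
qed

definition chain_F :: "nat \<Rightarrow> kh_elt" where
  "chain_F p = (\<Sum>i\<in>{1..<p}. frag_cmul (int i) (frag_of (Poly_Mapping.single i 1, {p - i})))"

lemma chain_F_homog: "chain_F p \<in> kh_homog p (2*p+6) (2*p+1)"
proof -
  have "kh_valid_mon p m \<and> kh_qdeg m = 2*p+6 \<and> kh_tdeg m = 2*p+1"
    if key: "m \<in> Poly_Mapping.keys (chain_F p)" for m
  proof -
    have "Poly_Mapping.keys (chain_F p)
        \<subseteq> (\<Union>i\<in>{1..<p}. Poly_Mapping.keys (frag_cmul (int i) (frag_of (Poly_Mapping.single i 1, {p - i}))))"
      unfolding chain_F_def by (rule keys_sum)
    then obtain i where i: "i \<in> {1..<p}"
      and "m \<in> Poly_Mapping.keys (frag_cmul (int i) (frag_of (Poly_Mapping.single i 1, {p - i})))"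
      using key by blast
    then have "m = (Poly_Mapping.single i 1, {p - i})"
      by simp
    then show ?thesis
      using i by (auto simp: kh_valid_mon_def qdeg_weight tdeg_weight)
  qed
  then show ?thesis
    by (auto simp: kh_homog_def kh_A_def)
qed

lemma d_chain_F: "kh_d (chain_F p) = (\<Sum>i\<in>{1..<p}. \<Sum>l\<le>p-i. frag_cmul (int i) (frag_of (x3 i l (p-i-l))))"
  unfolding chain_F_def kh_d_def frag_extend_sum[OF finite_atLeastLessThan] o_def frag_extend_cmul
    frag_extend_of d_x_xi frag_cmul_sum ..

text \<open>Only the term x_1 xi_{p-1} of F contributes to detect(d F).\<close>
lemma detect_d_chain_F:
  assumes "3 < p"
  shows "frag_eval detect (kh_d (chain_F p)) = int p"
proof -
  have "frag_eval detect (kh_d (chain_F p)) =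
      (\<Sum>i\<in>{1..<p}. int i * frag_eval detect (kh_d_mon (Poly_Mapping.single i 1, {p - i})))"
    by (simp add: chain_F_def kh_d_def frag_extend_sum frag_extend_cmul frag_eval_sum)
  also have "\<dots> = (\<Sum>i\<in>{1..<p}. (if i = 1 then int p else 0))"
    by (rule sum.cong) (use assms detect_d_x_xi in auto)
  also have "\<dots> = int p" using assms by simp
  finally show ?thesis .
qed

definition triples :: "nat \<Rightarrow> (nat \<times> nat \<times> nat) set" where
  "triples p = {(a,b,c). a < p \<and> b < p \<and> c < p \<and> a + b + c = p}"

lemma finite_triples: "finite (triples p)"
  by (rule finite_subset[of _ "{..<p} \<times> {..<p} \<times> {..<p}"]) (auto simp: triples_def)

lemma triples_symmetrisation:
  fixes H :: "nat \<Rightarrow> nat \<Rightarrow> nat \<Rightarrow> int"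
  assumes s12: "\<And>a b c. H a b c = H b a c" and s13: "\<And>a b c. H a b c = H c b a"
  shows "3 * (\<Sum>(a,b,c)\<in>triples p. int a * H a b c) = int p * (\<Sum>(a,b,c)\<in>triples p. H a b c)"
proof -
  let ?S1 = "(\<Sum>(a,b,c)\<in>triples p. int a * H a b c)"
  let ?S2 = "(\<Sum>(a,b,c)\<in>triples p. int b * H a b c)"
  let ?S3 = "(\<Sum>(a,b,c)\<in>triples p. int c * H a b c)"
  have "?S1 = ?S2"
    by (rule sum.reindex_bij_witness[of _ "\<lambda>(a,b,c). (b,a,c)" "\<lambda>(a,b,c). (b,a,c)"])
       (auto simp: triples_def s12[symmetric])
  moreover have "?S1 = ?S3"
    by (rule sum.reindex_bij_witness[of _ "\<lambda>(a,b,c). (c,b,a)" "\<lambda>(a,b,c). (c,b,a)"])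
       (auto simp: triples_def s13[symmetric])
  moreover have "?S1 + ?S2 + ?S3 = (\<Sum>(a,b,c)\<in>triples p. (int a + int b + int c) * H a b c)"
    by (simp add: sum.distrib[symmetric] case_prod_beta algebra_simps)
  moreover have "\<dots> = int p * (\<Sum>(a,b,c)\<in>triples p. H a b c)"
    by (auto simp: triples_def sum_distrib_left simp flip: of_nat_add intro!: sum.cong)
  ultimately show ?thesis by simp
qed

lemma coeff_d_chain_F:
  "Poly_Mapping.lookup (kh_d (chain_F p)) m =
     (\<Sum>(a,b,c)\<in>triples p. int a * (if m = x3 a b c then 1 else 0))"
proof -
  let ?G = "\<lambda>(a,b,c). int a * (if m = x3 a b c then 1 else (0::int))"
  let ?I = "Sigma {1..<p} (\<lambda>i. {..p-i})"
  let ?f = "\<lambda>(i,l). (i, l, p-i-l)"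
  have "Poly_Mapping.lookup (kh_d (chain_F p)) m = (\<Sum>i\<in>{1..<p}. \<Sum>l\<le>p-i. ?G (i, l, p-i-l))"
    by (simp add: d_chain_F lookup_sum)
  also have "\<dots> = (\<Sum>(i,l)\<in>?I. ?G (?f (i,l)))"
    by (subst sum.Sigma) auto
  also have "\<dots> = sum ?G (?f ` ?I)"
    by (subst sum.reindex) (auto simp: inj_on_def case_prod_beta)
  also have "?f ` ?I = triples p \<inter> {t. 1 \<le> fst t}"
    by (auto simp: triples_def image_iff intro!: bexI[where x = "(fst t, fst (snd t))" for t])
  also have "sum ?G (triples p \<inter> {t. 1 \<le> fst t}) = sum ?G (triples p)"
    by (rule sum.mono_neutral_left) (auto simp: finite_triples)
  finally show ?thesis .
qed

lemma coeff_d_chain_F_dvd: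
  assumes "prime p" "3 < p"
  shows "int p dvd Poly_Mapping.lookup (kh_d (chain_F p)) m"
proof -
  have "3 * Poly_Mapping.lookup (kh_d (chain_F p)) m
          = int p * (\<Sum>(a,b,c)\<in>triples p. if m = x3 a b c then 1 else 0)"
    unfolding coeff_d_chain_F
    by (rule triples_symmetrisation) (metis x3_swap12, metis x3_swap13)
  then have "int p dvd 3 * Poly_Mapping.lookup (kh_d (chain_F p)) m"
    by simp
  moreover have "\<not> int p dvd 3"
    using assms(2) zdvd_imp_le[of "int p" 3] by auto
  ultimately show ?thesis
    using assms(1) prime_dvd_mult_iff[of "int p"] by auto
qed

section \<open>The torsion cycle z = (d F) / p\<close>

definition torsion_cycle :: "nat \<Rightarrow> kh_elt" where
  "torsion_cycle p = Poly_Mapping.map (\<lambda>c. c div int p) (kh_d (chain_F p))"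

lemma lookup_torsion_cycle:
  "Poly_Mapping.lookup (torsion_cycle p) m = Poly_Mapping.lookup (kh_d (chain_F p)) m div int p"
  by (simp add: torsion_cycle_def map.rep_eq when_def)

lemma torsion_cycle_times_p:
  assumes "prime p" "3 < p"
  shows "frag_cmul (int p) (torsion_cycle p) = kh_d (chain_F p)"
  by (rule poly_mapping_eqI) (simp add: lookup_torsion_cycle coeff_d_chain_F_dvd[OF assms])

lemma keys_torsion_cycle:
  assumes "m \<in> Poly_Mapping.keys (torsion_cycle p)"
  obtains i l where "1 \<le> i" "i < p" "l \<le> p - i" "m = x3 i l (p-i-l)"
proof -
  have "Poly_Mapping.keys (kh_d (chain_F p))
    \<subseteq> (\<Union>i\<in>{1..<p}. \<Union>l\<in>{..p-i}. Poly_Mapping.keys (frag_cmul (int i) (frag_of (x3 i l (p-i-l)))))"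
    unfolding d_chain_F by (rule order.trans[OF keys_sum UN_mono[OF order.refl keys_sum]])
  moreover have "m \<in> Poly_Mapping.keys (kh_d (chain_F p))"
    using assms by (auto simp: in_keys_iff lookup_torsion_cycle)
  ultimately obtain i l where "i \<in> {1..<p}" "l \<in> {..p - i}"
    and "m \<in> Poly_Mapping.keys (frag_cmul (int i) (frag_of (x3 i l (p-i-l))))"
    by blast
  then show thesis
    using that[of i l] by simp
qed

text \<open>z is a chain of bidegree (2p+6, 2p) without xi-factors, hence a cycle.\<close>
lemma torsion_cycle_homog: "torsion_cycle p \<in> kh_homog p (2*p+6) (2*p)"
proof -
  have "kh_valid_mon p m \<and> kh_qdeg m = 2*p+6 \<and> kh_tdeg m = 2*p"
    if key: "m \<in> Poly_Mapping.keys (torsion_cycle p)" for m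
  proof -
    obtain i l where "1 \<le> i" "i < p" "l \<le> p - i" and m: "m = x3 i l (p-i-l)"
      using key by (rule keys_torsion_cycle)
    then have "i + l + (p-i-l) = p" "l < p" "p - i - l < p" by auto
    then show ?thesis
      unfolding m x3_bidegree using x3_valid[of i p l "p-i-l"] \<open>i < p\<close> by simp
  qed
  then show ?thesis by (auto simp: kh_homog_def kh_A_def)
qed

lemma torsion_cycle_is_cycle: "kh_d (torsion_cycle p) = 0"
  unfolding kh_d_def
proof (rule frag_extend_eq_0)
  fix m assume "m \<in> Poly_Mapping.keys (torsion_cycle p)"
  then obtain i l where "m = x3 i l (p-i-l)" by (rule keys_torsion_cycle)
  then show "kh_d_mon m = 0" by (simp add: kh_d_mon_def x3_def)
qed

lemma detect_torsion_cycle: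
  assumes "prime p" "3 < p"
  shows "frag_eval detect (torsion_cycle p) = 1"
proof -
  have "int p * frag_eval detect (torsion_cycle p) = int p"
    using detect_d_chain_F[OF assms(2)] torsion_cycle_times_p[OF assms] frag_eval_cmul by metis
  then show ?thesis using assms(2) by simp
qed

theorem mainTheorem2:
  fixes p :: nat
  assumes "prime p" and "p > 3"
  shows "\<exists>z \<in> kh_cycles p (2*p+6) (2*p).
           frag_cmul (int p) z \<in> kh_boundaries p (2*p+6) (2*p) \<and>
           (\<forall>k::nat. 0 < k \<and> k < p \<longrightarrow> frag_cmul (int k) z \<notin> kh_boundaries p (2*p+6) (2*p))"
proof (intro bexI conjI allI impI)
  show "torsion_cycle p \<in> kh_cycles p (2*p+6) (2*p)"
    using torsion_cycle_homog torsion_cycle_is_cycle by (simp add: kh_cycles_def)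
  show "frag_cmul (int p) (torsion_cycle p) \<in> kh_boundaries p (2*p+6) (2*p)"
    using chain_F_homog by (simp add: kh_boundaries_def torsion_cycle_times_p[OF assms])
  fix k :: nat assume k: "0 < k \<and> k < p"
  show "frag_cmul (int k) (torsion_cycle p) \<notin> kh_boundaries p (2*p+6) (2*p)"
  proof
    assume "frag_cmul (int k) (torsion_cycle p) \<in> kh_boundaries p (2*p+6) (2*p)"
    then obtain f where f: "f \<in> kh_homog p (2*p+6) (2*p+1)"
      and eq: "frag_cmul (int k) (torsion_cycle p) = kh_d f"
      by (auto simp: kh_boundaries_def)
    have "frag_eval detect (kh_d f) = int k"
      unfolding eq[symmetric] frag_eval_cmul detect_torsion_cycle[OF assms] by simp
    moreover have "int p dvd frag_eval detect (kh_d f)"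
      using f assms(2) by (rule detect_boundary_dvd)
    ultimately have "p dvd k"
      by simp
    then show False using k by (simp add: nat_dvd_not_less)
  qed
qed

end
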